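(* Let $X,Y,E,F$ be in Situation 1 or Situation 3 (see context), with $E$ finite-dimensional, and let $T:A(X,E)\to A(Y,F)$ be a linear biseparating map. Then $F$ is finite-dimensional and linearly isomorphic to $E$ (i.e. $\dim F=\dim E$).
   Context: $\mathbb K=\mathbb R$ or $\mathbb C$; $E,F$ are $\mathbb K$-normed spaces. For a topological space $Z$ and normed space $G$, $C(Z,G)$ denotes the continuous $G$-valued functions on $Z$, and for a metric space $Z$, $C_b^u(Z,G)$ the bounded uniformly continuous ones. Situation 1: $X,Y$ realcompact completely regular spaces, $A(X,E)=C(X,E)$, $A(Y,F)=C(Y,F)$. Situation 3: $X,Y$ complete metric spaces, $A(X,E)=C_b^u(X,E)$, $A(Y,F)=C_b^u(Y,F)$. The cozero set of $f$ is $c(f)=\{x: f(x)\neq0\}$. A map $T$ is separating if it is additive and $c(Tf)\cap c(Tg)=\emptyset$ whenever $c(f)\cap c(g)=\emptyset$; biseparating if it is bijective and both $T$ and $T^{-1}$ are separating. *)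

theory Defs
  imports "HOL-Analysis.Analysis"
begin

definition zero_sets :: "'a topology \<Rightarrow> 'a set set" where
  "zero_sets X = {{x \<in> topspace X. f x = 0} | f. continuous_map X euclideanreal f}"

definition z_filter :: "'a topology \<Rightarrow> 'a set set \<Rightarrow> bool" where
  "z_filter X \<F> \<longleftrightarrow> \<F> \<subseteq> zero_sets X \<and> \<F> \<noteq> {} \<and> {} \<notin> \<F>
     \<and> (\<forall>A\<in>\<F>. \<forall>B\<in>\<F>. A \<inter> B \<in> \<F>)
     \<and> (\<forall>A\<in>\<F>. \<forall>B\<in>zero_sets X. A \<subseteq> B \<longrightarrow> B \<in> \<F>)"

definition z_ultrafilter :: "'a topology \<Rightarrow> 'a set set \<Rightarrow> bool" where
  "z_ultrafilter X \<F> \<longleftrightarrow> z_filter X \<F> \<and> (\<forall>\<G>. z_filter X \<G> \<and> \<F> \<subseteq> \<G> \<longrightarrow> \<G> = \<F>)"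

definition countable_intersection_property :: "'a set set \<Rightarrow> bool" where
  "countable_intersection_property \<F> \<longleftrightarrow>
     (\<forall>\<C>. \<C> \<subseteq> \<F> \<and> \<C> \<noteq> {} \<and> countable \<C> \<longrightarrow> \<Inter>\<C> \<noteq> {})"

definition realcompact :: "'a topology \<Rightarrow> bool" where
  "realcompact X \<longleftrightarrow> completely_regular_space X \<and> Hausdorff_space X \<and>
     (\<forall>\<F>. z_ultrafilter X \<F> \<and> countable_intersection_property \<F> \<longrightarrow> \<Inter>\<F> \<noteq> {})"

definition C_space :: "'a topology \<Rightarrow> ('a \<Rightarrow> 'e::real_normed_vector) set" where
  "C_space X = {f. continuous_map X euclidean f \<and> (\<forall>x. x \<notin> topspace X \<longrightarrow> f x = 0)}"

definition Cbu_space :: "'a metric \<Rightarrow> ('a \<Rightarrow> 'e::real_normed_vector) set" where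
  "Cbu_space m = {f. uniformly_continuous_map m euclidean_metric f
                    \<and> (\<exists>B. \<forall>x\<in>mspace m. norm (f x) \<le> B)
                    \<and> (\<forall>x. x \<notin> mspace m \<longrightarrow> f x = 0)}"

definition cozero :: "'a topology \<Rightarrow> ('a \<Rightarrow> 'e::zero) \<Rightarrow> 'a set" where
  "cozero X f = {x \<in> topspace X. f x \<noteq> 0}"

definition separating_map ::
  "'a topology \<Rightarrow> 'b topology \<Rightarrow> ('a \<Rightarrow> 'e::real_normed_vector) set
     \<Rightarrow> (('a \<Rightarrow> 'e) \<Rightarrow> ('b \<Rightarrow> 'f::real_normed_vector)) \<Rightarrow> bool" where
  "separating_map X Y A T \<longleftrightarrow>
     (\<forall>f\<in>A. \<forall>g\<in>A. T (\<lambda>x. f x + g x) = (\<lambda>y. T f y + T g y)) \<and>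
     (\<forall>f\<in>A. \<forall>g\<in>A. cozero X f \<inter> cozero X g = {} \<longrightarrow> cozero Y (T f) \<inter> cozero Y (T g) = {})"

definition biseparating_map ::
  "'a topology \<Rightarrow> 'b topology \<Rightarrow> ('a \<Rightarrow> 'e::real_normed_vector) set \<Rightarrow> ('b \<Rightarrow> 'f::real_normed_vector) set
     \<Rightarrow> (('a \<Rightarrow> 'e) \<Rightarrow> ('b \<Rightarrow> 'f)) \<Rightarrow> bool" where
  "biseparating_map X Y A B T \<longleftrightarrow> bij_betw T A B \<and> separating_map X Y A T
     \<and> separating_map Y X B (inv_into A T)"

definition linear_on :: "('a \<Rightarrow> 'e::real_normed_vector) set \<Rightarrow> (('a \<Rightarrow> 'e) \<Rightarrow> ('b \<Rightarrow> 'f::real_normed_vector)) \<Rightarrow> bool" where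
  "linear_on A T \<longleftrightarrow> (\<forall>f\<in>A. \<forall>g\<in>A. T (\<lambda>x. f x + g x) = (\<lambda>y. T f y + T g y)) \<and>
     (\<forall>c::real. \<forall>f\<in>A. T (\<lambda>x. c *\<^sub>R f x) = (\<lambda>y. c *\<^sub>R T f y))"

definition finite_dim_space :: "'e::real_vector itself \<Rightarrow> bool" where
  "finite_dim_space _ \<longleftrightarrow> (\<exists>B::'e set. finite B \<and> span B = UNIV)"

end

theory Submission
  imports Defs
begin

(*
  The maps e \<mapsto> T (const e) y0 : E \<rightarrow> F and v \<mapsto> T^(-1) (const v) x0 : F \<rightarrow> E are
  linear, and injective by the key fact: if T \<phi> is a nonzero constant w, then \<phi> vanishes
  nowhere. Their composite is an injective endomorphism of the finite-dimensional space E,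
  hence surjective, so F \<cong> E.

  For the key fact, suppose \<phi> x1 = 0. The map stair_map s v = staircase (s + |v|^(-1/2)) v is
  continuous, uniformly so on bounded sets, and equals n v where s + |v|^(-1/2) is within
  1/4 of the integer n. Separation gives T (stair_map s \<circ> \<phi>) = n w wherever T of a function
  supported in that level set is nonzero. Applying T^(-1) to p (|T (stair_map s \<circ> \<phi>)|) w, with p of
  cubic growth, yields a continuous function of norm > n on the n-th level set, so continuity
  at x1 keeps all but finitely many level sets away from x1. The shifts s = 0, 1/3, 2/3
  together catch every small nonzero value of \<phi>, hence \<phi> vanishes near x1. A bump u at x1
  supported there has cozero set disjoint from that of \<phi>, so T u vanishes wherever
  T \<phi> = w, i.e. everywhere, contradicting injectivity.
*)

section \<open>Uniform continuity on bounded sets\<close>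

lemma uniformly_continuous_on_subset:
  fixes f :: "'a::metric_space \<Rightarrow> 'b::metric_space"
  shows "uniformly_continuous_on S f \<Longrightarrow> T \<subseteq> S \<Longrightarrow> uniformly_continuous_on T f"
  unfolding uniformly_continuous_on_def by (meson subsetD)

lemma uniformly_continuous_on_cong:
  fixes f g :: "'a::metric_space \<Rightarrow> 'b::metric_space"
  shows "(\<And>x. x \<in> S \<Longrightarrow> f x = g x) \<Longrightarrow> uniformly_continuous_on S f \<longleftrightarrow> uniformly_continuous_on S g"
  unfolding uniformly_continuous_on_def by simp

lemma uniformly_continuous_on_scaleR:
  fixes f :: "'a::metric_space \<Rightarrow> real" and g :: "'a \<Rightarrow> 'b::real_normed_vector"
  assumes "uniformly_continuous_on S f" "uniformly_continuous_on S g"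
    and "bounded (f ` S)" "bounded (g ` S)"
  shows "uniformly_continuous_on S (\<lambda>x. f x *\<^sub>R g x)"
proof -
  obtain Bf Bg where Bf: "\<And>x. x \<in> S \<Longrightarrow> \<bar>f x\<bar> \<le> Bf" and Bg: "\<And>x. x \<in> S \<Longrightarrow> norm (g x) \<le> Bg"
    using assms(3,4) by (fastforce simp: bounded_iff)
  have "dist (f a *\<^sub>R g a) (f b *\<^sub>R g b) \<le> Bf * dist (g a) (g b) + Bg * dist (f a) (f b)"
    if "a \<in> S" "b \<in> S" for a b
  proof -
    have "f a *\<^sub>R g a - f b *\<^sub>R g b = f a *\<^sub>R (g a - g b) + (f a - f b) *\<^sub>R g b"
      by (simp add: algebra_simps)
    then have "dist (f a *\<^sub>R g a) (f b *\<^sub>R g b) \<le> \<bar>f a\<bar> * dist (g a) (g b) + norm (g b) * \<bar>f a - f b\<bar>"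
      by (metis dist_norm norm_scaleR norm_triangle_ineq mult.commute)
    also have "\<dots> \<le> Bf * dist (g a) (g b) + Bg * dist (f a) (f b)"
      using Bf[of a] Bg[of b] that by (auto simp: dist_real_def intro!: add_mono mult_right_mono)
    finally show ?thesis .
  qed
  note bound = this
  show ?thesis
    unfolding uniformly_continuous_on_sequentially
  proof (intro allI impI, elim conjE)
    fix x y assume x: "\<forall>n. x n \<in> S" and y: "\<forall>n. y n \<in> S"
      and "(\<lambda>n. dist (x n) (y n)) \<longlonglongrightarrow> 0"
    then have "(\<lambda>n. dist (f (x n)) (f (y n))) \<longlonglongrightarrow> 0" "(\<lambda>n. dist (g (x n)) (g (y n))) \<longlonglongrightarrow> 0"
      using assms(1,2) unfolding uniformly_continuous_on_sequentially by blast+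
    then have "(\<lambda>n. Bf * dist (g (x n)) (g (y n)) + Bg * dist (f (x n)) (f (y n))) \<longlonglongrightarrow> 0"
      using tendsto_add[OF tendsto_mult_right_zero tendsto_mult_right_zero] by fastforce
    then show "(\<lambda>n. dist (f (x n) *\<^sub>R g (x n)) (f (y n) *\<^sub>R g (y n))) \<longlonglongrightarrow> 0"
      by (rule Lim_null_comparison[rotated]) (simp add: bound x y)
  qed
qed

lemma uniformly_continuous_on_away_from_point:
  fixes g :: "'a::metric_space \<Rightarrow> 'b::metric_space"
  assumes cont: "continuous (at c within S) g"
    and away: "\<And>\<eta>. \<eta> > 0 \<Longrightarrow> uniformly_continuous_on (S - ball c \<eta>) g"
  shows "uniformly_continuous_on S g"
  unfolding uniformly_continuous_on_def
proof (intro allI impI)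
  fix \<epsilon> :: real assume "\<epsilon> > 0"
  then obtain t where "t > 0" and t: "\<And>x. x \<in> S \<Longrightarrow> dist x c < t \<Longrightarrow> dist (g x) (g c) < \<epsilon> / 2"
    using cont unfolding continuous_within_eps_delta by (meson half_gt_zero)
  obtain \<delta> where "\<delta> > 0" and \<delta>: "\<And>x x'. x \<in> S - ball c (t/2) \<Longrightarrow> x' \<in> S - ball c (t/2) \<Longrightarrow>
      dist x' x < \<delta> \<Longrightarrow> dist (g x') (g x) < \<epsilon>"
    using away[of "t/2"] \<open>t > 0\<close> \<open>\<epsilon> > 0\<close> unfolding uniformly_continuous_on_def by (meson half_gt_zero)
  have "dist (g x') (g x) < \<epsilon>" if "x \<in> S" "x' \<in> S" "dist x' x < min \<delta> (t/2)" for x x'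
  proof (cases "x \<in> ball c (t/2) \<or> x' \<in> ball c (t/2)")
    case True
    then have "dist x c < t/2 \<or> dist x' c < t/2"
      by (simp add: dist_commute)
    then have "dist x c < t" "dist x' c < t"
      using that(3) dist_triangle[of x' c x] dist_triangle[of x c x'] dist_commute[of x x']
      by linarith+
    then show ?thesis
      using t[of x] t[of x'] that dist_triangle_half_l[of "g x'" "g c" \<epsilon> "g x"] by blast
  next
    case False
    then show ?thesis using \<delta> that by auto
  qed
  then show "\<exists>d>0. \<forall>x\<in>S. \<forall>x'\<in>S. dist x' x < d \<longrightarrow> dist (g x') (g x) < \<epsilon>"
    using \<open>\<delta> > 0\<close> \<open>t > 0\<close> by (intro exI[of _ "min \<delta> (t/2)"]) auto
qed

lemma uniformly_continuous_on_radial_profile: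
  fixes w :: "'b::real_normed_vector"
  assumes "continuous_on UNIV p"
  shows "uniformly_continuous_on (cball (0::'a::real_normed_vector) B) (\<lambda>v. p (norm v) *\<^sub>R w)"
proof -
  have "uniformly_continuous_on {0..B} p"
    using assms by (intro compact_uniformly_continuous) (auto intro: continuous_on_subset)
  then have "uniformly_continuous_on (cball (0::'a) B) (\<lambda>v. p (norm v))"
    by (intro uniformly_continuous_on_compose[of _ norm p] uniformly_continuous_on_norm
        uniformly_continuous_on_id) (auto elim: uniformly_continuous_on_subset)
  then show ?thesis
    using bounded_linear.uniformly_continuous_on[OF bounded_linear_scaleR_left] by blast
qed

lemma bounded_radial_profile_image:
  fixes w :: "'b::real_normed_vector"
  assumes "continuous_on UNIV p"
  shows "bounded ((\<lambda>v. p (norm v) *\<^sub>R w) ` cball (0::'a::real_normed_vector) B)"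
proof -
  have "compact ((\<lambda>t. p t *\<^sub>R w) ` {0..B})"
    using assms by (intro compact_continuous_image continuous_intros) (auto intro: continuous_on_subset)
  moreover have "(\<lambda>v. p (norm v) *\<^sub>R w) ` cball (0::'a) B \<subseteq> (\<lambda>t. p t *\<^sub>R w) ` {0..B}"
    by auto
  ultimately show ?thesis
    using bounded_subset compact_imp_bounded by blast
qed

section \<open>Staircase maps\<close>

definition staircase :: "real \<Rightarrow> real" where
  "staircase r = r - arcsin (sin (2 * pi * r)) / (2 * pi)"

lemma continuous_on_staircase [continuous_intros]:
  "continuous_on S f \<Longrightarrow> continuous_on S (\<lambda>x. staircase (f x))"
proof -
  have "continuous_on UNIV staircase"
    unfolding staircase_def by (intro continuous_intros) auto
  then show "continuous_on S f \<Longrightarrow> continuous_on S (\<lambda>x. staircase (f x))"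
    using continuous_on_compose2 by blast
qed

lemma staircase_eq_int:
  assumes "\<bar>r - of_int n\<bar> \<le> 1/4"
  shows "staircase r = of_int n"
proof -
  have "sin (2 * pi * r) = sin (2 * pi * (r - of_int n) + (2 * pi) * of_int n)"
    by (simp add: algebra_simps)
  also have "\<dots> = sin (2 * pi * (r - of_int n))"
    by (simp add: sin_add)
  finally have sin_eq: "sin (2 * pi * r) = sin (2 * pi * (r - of_int n))" .
  have "\<bar>2 * pi * (r - of_int n)\<bar> = 2 * pi * \<bar>r - of_int n\<bar>"
    by (simp add: abs_mult)
  also have "\<dots> \<le> 2 * pi * (1/4)"
    using assms by (intro mult_left_mono) auto
  finally have "- (pi / 2) \<le> 2 * pi * (r - of_int n)" "2 * pi * (r - of_int n) \<le> pi / 2"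
    unfolding abs_le_iff by linarith+
  then have "arcsin (sin (2 * pi * r)) = 2 * pi * (r - of_int n)"
    using sin_eq arcsin_sin by simp
  then show ?thesis
    by (simp add: staircase_def)
qed

lemma staircase_dist_le: "\<bar>staircase r - r\<bar> \<le> 1/4"
proof -
  have "- (pi / 2) \<le> arcsin (sin (2 * pi * r)) \<and> arcsin (sin (2 * pi * r)) \<le> pi / 2"
    by (rule arcsin_bounded) auto
  then have "\<bar>arcsin (sin (2 * pi * r))\<bar> \<le> pi / 2"
    by linarith
  then have "\<bar>arcsin (sin (2 * pi * r)) / (2 * pi)\<bar> \<le> (pi / 2) / (2 * pi)"
    by (simp add: abs_div divide_right_mono)
  then show ?thesis
    by (simp add: staircase_def)
qed

lemma shifted_near_int:
  fixes r :: real
  shows "\<exists>s\<in>{0, 1/3, 2/3}. \<exists>n::int. \<bar>s + r - of_int n\<bar> < 1/4"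
proof -
  define j where "j = \<lfloor>3 * r + 1/2\<rfloor>"
  define i where "i = (- j) mod 3"
  have j: "- 1/2 \<le> 3 * r - of_int j" "3 * r - of_int j \<le> 1/2"
    unfolding j_def by linarith+
  have "0 \<le> i" "i < 3"
    unfolding i_def by simp_all
  then have i: "i = 0 \<or> i = 1 \<or> i = 2"
    by linarith
  have "3 dvd j + i"
    unfolding i_def by (simp add: mod_add_right_eq flip: mod_eq_0_iff_dvd)
  then obtain n where "j + i = 3 * n" ..
  then have "real_of_int j + of_int i = 3 * of_int n"
    by (metis of_int_add of_int_mult of_int_numeral)
  with i j have "\<bar>of_int i / 3 + r - of_int n\<bar> < 1/4" and "of_int i / 3 \<in> {0, 1/3, 2/3::real}"
    unfolding abs_less_iff by auto
  then show ?thesis by meson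
qed

definition stair_map :: "real \<Rightarrow> 'a::real_normed_vector \<Rightarrow> 'a" where
  "stair_map s v = (if v = 0 then 0 else staircase (s + 1 / sqrt (norm v)) *\<^sub>R v)"

lemma stair_map_zero [simp]: "stair_map s 0 = 0"
  by (simp add: stair_map_def)

lemma stair_map_eq_int_scaleR:
  "v \<noteq> 0 \<Longrightarrow> \<bar>s + 1 / sqrt (norm v) - of_int n\<bar> \<le> 1/4 \<Longrightarrow> stair_map s v = of_int n *\<^sub>R v"
  by (simp add: stair_map_def staircase_eq_int)

lemma norm_stair_map_le: "norm (stair_map s v) \<le> (\<bar>s\<bar> + 1/4) * norm v + sqrt (norm v)"
proof (cases "v = 0")
  case False
  have "\<bar>staircase (s + 1 / sqrt (norm v))\<bar> \<le> \<bar>s\<bar> + 1/4 + 1 / sqrt (norm v)"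
    using staircase_dist_le[of "s + 1 / sqrt (norm v)"] abs_ge_self[of s] abs_ge_minus_self[of s]
      real_sqrt_ge_zero[OF norm_ge_zero, of v]
    unfolding abs_le_iff by (smt (verit) divide_nonneg_nonneg)
  then have "norm (stair_map s v) \<le> (\<bar>s\<bar> + 1/4 + 1 / sqrt (norm v)) * norm v"
    using False by (simp add: stair_map_def mult_right_mono)
  also have "\<dots> = (\<bar>s\<bar> + 1/4) * norm v + sqrt (norm v)"
    using False by (simp add: algebra_simps real_div_sqrt)
  finally show ?thesis .
qed simp

lemma isCont_stair_map:
  fixes v :: "'a::real_normed_vector"
  shows "isCont (stair_map s) v"
proof (cases "v = 0")
  case True
  have "((\<lambda>v. (\<bar>s\<bar> + 1/4) * norm v + sqrt (norm v)) \<longlongrightarrow> 0) (at (0::'a))"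
    by (auto intro!: tendsto_eq_intros)
  then have "(stair_map s \<longlongrightarrow> 0) (at (0::'a))"
    by (rule Lim_null_comparison[rotated]) (simp add: norm_stair_map_le)
  then show ?thesis
    using True by (simp add: isCont_def)
next
  case False
  have "continuous_on (- {0}) (\<lambda>v::'a. staircase (s + 1 / sqrt (norm v)) *\<^sub>R v)"
    by (intro continuous_intros) auto
  then have "continuous_on (- {0}) (stair_map s :: 'a \<Rightarrow> 'a)"
    by (rule continuous_on_cong[THEN iffD1, rotated 2]) (auto simp: stair_map_def)
  moreover have "open (- {0::'a})"
    by auto
  ultimately show ?thesis
    using False continuous_on_eq_continuous_at by blast
qed

lemma uniformly_continuous_on_stair_map:
  "uniformly_continuous_on (cball (0::'a::real_normed_vector) B) (stair_map s)"
proof (rule uniformly_continuous_on_away_from_point)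
  show "continuous (at 0 within cball 0 B) (stair_map s)"
    using isCont_stair_map continuous_at_imp_continuous_at_within by blast
next
  fix \<eta> :: real assume "\<eta> > 0"
  define S where "S = cball (0::'a) B - ball 0 \<eta>"
  define q where "q t = staircase (s + 1 / sqrt t)" for t
  have norm_S: "norm ` S \<subseteq> {\<eta>..B}"
    by (auto simp: S_def)
  have "continuous_on {\<eta>..B} q"
    unfolding q_def using \<open>\<eta> > 0\<close> by (intro continuous_intros) auto
  then have "uniformly_continuous_on {\<eta>..B} q" "bounded (q ` {\<eta>..B})"
    by (auto intro: compact_uniformly_continuous compact_imp_bounded compact_continuous_image)
  moreover have "(\<lambda>v. q (norm v)) ` S \<subseteq> q ` {\<eta>..B}"
    using norm_S by auto
  ultimately have "uniformly_continuous_on S (\<lambda>v. q (norm v))" "bounded ((\<lambda>v. q (norm v)) ` S)"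
    using norm_S
    by (auto intro!: uniformly_continuous_on_compose[of S norm q] uniformly_continuous_on_norm
        uniformly_continuous_on_id elim: uniformly_continuous_on_subset bounded_subset)
  then have "uniformly_continuous_on S (\<lambda>v. q (norm v) *\<^sub>R v)"
    by (intro uniformly_continuous_on_scaleR uniformly_continuous_on_id) (auto simp: S_def)
  moreover have "q (norm v) *\<^sub>R v = stair_map s v" if "v \<in> S" for v
    using that \<open>\<eta> > 0\<close> by (auto simp: S_def q_def stair_map_def)
  ultimately have "uniformly_continuous_on S (stair_map s)"
    using uniformly_continuous_on_cong[of S "\<lambda>v. q (norm v) *\<^sub>R v" "stair_map s"] by simp
  then show "uniformly_continuous_on (cball (0::'a) B - ball 0 \<eta>) (stair_map s)"
    by (simp add: S_def)
qed

lemma bounded_stair_map_image: "bounded (stair_map s ` cball (0::'a::real_normed_vector) B)"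
  unfolding bounded_iff
proof (intro exI ballI)
  fix w :: 'a assume "w \<in> stair_map s ` cball 0 B"
  then obtain v where "norm v \<le> B" and w: "w = stair_map s v"
    by auto
  moreover have "sqrt (norm v) \<le> sqrt B" "(\<bar>s\<bar> + 1/4) * norm v \<le> (\<bar>s\<bar> + 1/4) * B"
    using \<open>norm v \<le> B\<close> by (auto intro: real_sqrt_le_mono mult_left_mono)
  ultimately show "norm w \<le> (\<bar>s\<bar> + 1/4) * B + sqrt B"
    unfolding w using norm_stair_map_le[of s v] by linarith
qed

lemma near_int_inverse_sqrt_imp_one_less:
  assumes "0 \<le> s" "0 < t" "\<bar>s + 1 / sqrt t - of_int n\<bar> < 1/4"
  shows "1 < (of_int n + 1)^2 * t"
proof -
  have "1 / sqrt t < of_int n + 1"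
    using assms(1,3) by linarith
  then have "1 < (of_int n + 1) * sqrt t"
    using assms(2) by (simp add: field_simps)
  then have "1 < ((of_int n + 1) * sqrt t)^2"
    by (simp add: one_less_power)
  then show ?thesis
    using assms(2) by (simp add: power_mult_distrib)
qed

lemma near_int_inverse_sqrt_imp_less:
  assumes "0 \<le> M" "0 < t" "t < 1 / (of_int M + 2)^2" "0 \<le> s" "\<bar>s + 1 / sqrt t - of_int n\<bar> < 1/4"
  shows "M < n"
proof -
  have "sqrt t < 1 / (of_int M + 2)"
    using real_sqrt_less_mono[OF assms(3)] assms(1) by (simp add: real_sqrt_divide)
  then have "of_int M + 2 < 1 / sqrt t"
    using assms(1,2) by (simp add: field_simps)
  then have "real_of_int M < of_int n"
    using assms(4,5) unfolding abs_less_iff by linarith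
  then show ?thesis
    by simp
qed

definition stair_level_set :: "'x topology \<Rightarrow> ('x \<Rightarrow> 'e::real_normed_vector) \<Rightarrow> real \<Rightarrow> int \<Rightarrow> 'x set"
  where "stair_level_set X \<phi> s n =
    {x \<in> topspace X. \<phi> x \<noteq> 0 \<and> \<bar>s + 1 / sqrt (norm (\<phi> x)) - of_int n\<bar> < 1/4}"

lemma openin_stair_level_set:
  assumes "continuous_map X euclidean \<phi>"
  shows "openin X (stair_level_set X \<phi> s n)"
proof -
  have "open (- {0} \<inter> (\<lambda>v. s + 1 / sqrt (norm v)) -` ball (of_int n) (1/4))"
    by (intro continuous_open_preimage continuous_intros) auto
  then have "openin X {x \<in> topspace X. \<phi> x \<in> - {0} \<inter> (\<lambda>v. s + 1 / sqrt (norm v)) -` ball (of_int n) (1/4)}"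
    using assms openin_continuous_map_preimage open_openin by blast
  then show ?thesis
    by (simp add: stair_level_set_def dist_real_def abs_minus_commute)
qed

section \<open>Admissible function spaces\<close>

lemma Cbu_space_add:
  assumes "f \<in> Cbu_space m" "g \<in> Cbu_space m"
  shows "(\<lambda>x. f x + g x) \<in> Cbu_space m"
proof -
  have "uniformly_continuous_map m euclidean_metric (\<lambda>x. f x + g x)"
    unfolding uniformly_continuous_map_sequentially
  proof (intro conjI allI impI, simp, elim conjE)
    fix \<rho> \<sigma> assume "range \<rho> \<subseteq> mspace m" "range \<sigma> \<subseteq> mspace m" "(\<lambda>n. mdist m (\<rho> n) (\<sigma> n)) \<longlonglongrightarrow> 0"
    then have "(\<lambda>n. dist (f (\<rho> n)) (f (\<sigma> n)) + dist (g (\<rho> n)) (g (\<sigma> n))) \<longlonglongrightarrow> 0"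
      using assms unfolding Cbu_space_def uniformly_continuous_map_sequentially
      by (auto intro: tendsto_add_zero)
    then show "(\<lambda>n. mdist euclidean_metric (f (\<rho> n) + g (\<rho> n)) (f (\<sigma> n) + g (\<sigma> n))) \<longlonglongrightarrow> 0"
      by (rule Lim_null_comparison[rotated]) (simp add: dist_triangle_add)
  qed
  moreover obtain Bf Bg where "\<forall>x\<in>mspace m. norm (f x) \<le> Bf" "\<forall>x\<in>mspace m. norm (g x) \<le> Bg"
    using assms unfolding Cbu_space_def by blast
  then have "\<forall>x\<in>mspace m. norm (f x + g x) \<le> Bf + Bg"
    by (metis add_mono norm_triangle_le)
  ultimately show ?thesis
    using assms unfolding Cbu_space_def by auto
qed

lemma Cbu_space_scaleR:
  assumes "f \<in> Cbu_space m"
  shows "(\<lambda>x. c *\<^sub>R f x) \<in> Cbu_space m"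
proof -
  have "uniformly_continuous_map m euclidean_metric (\<lambda>x. c *\<^sub>R f x)"
    unfolding uniformly_continuous_map_sequentially
  proof (intro conjI allI impI, simp, elim conjE)
    fix \<rho> \<sigma> assume "range \<rho> \<subseteq> mspace m" "range \<sigma> \<subseteq> mspace m" "(\<lambda>n. mdist m (\<rho> n) (\<sigma> n)) \<longlonglongrightarrow> 0"
    then have "(\<lambda>n. \<bar>c\<bar> * dist (f (\<rho> n)) (f (\<sigma> n))) \<longlonglongrightarrow> 0"
      using assms unfolding Cbu_space_def uniformly_continuous_map_sequentially
      by (auto intro: tendsto_mult_right_zero)
    then show "(\<lambda>n. mdist euclidean_metric (c *\<^sub>R f (\<rho> n)) (c *\<^sub>R f (\<sigma> n))) \<longlonglongrightarrow> 0"
      by (simp add: dist_norm flip: scaleR_diff_right)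
  qed
  moreover obtain B where "\<forall>x\<in>mspace m. norm (f x) \<le> B"
    using assms unfolding Cbu_space_def by blast
  then have "\<forall>x\<in>mspace m. norm (c *\<^sub>R f x) \<le> \<bar>c\<bar> * B"
    by (simp add: mult_left_mono)
  ultimately show ?thesis
    using assms unfolding Cbu_space_def by auto
qed

lemma Cbu_space_compose:
  fixes g :: "'e::real_normed_vector \<Rightarrow> 'e"
  assumes f: "f \<in> Cbu_space m" and "g 0 = 0"
    and uc: "\<And>B. uniformly_continuous_on (cball 0 B) g" and bd: "\<And>B. bounded (g ` cball 0 B)"
  shows "(\<lambda>x. g (f x)) \<in> Cbu_space m"
proof -
  obtain B where B: "\<forall>x\<in>mspace m. norm (f x) \<le> B"
    using f unfolding Cbu_space_def by blast
  then have "uniformly_continuous_map m (submetric euclidean_metric (cball 0 B)) f"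
    using f by (auto simp: Cbu_space_def uniformly_continuous_map_into_submetric)
  moreover have "uniformly_continuous_map (submetric euclidean_metric (cball 0 B)) euclidean_metric g"
    using uc by simp
  ultimately have "uniformly_continuous_map m euclidean_metric (g \<circ> f)"
    by (rule uniformly_continuous_map_compose)
  moreover obtain C where "\<forall>v\<in>cball 0 B. norm (g v) \<le> C"
    using bd[of B] unfolding bounded_iff by blast
  then have "\<forall>x\<in>mspace m. norm (g (f x)) \<le> C"
    using B by auto
  ultimately show ?thesis
    using f \<open>g 0 = 0\<close> by (auto simp: Cbu_space_def o_def)
qed

lemma Cbu_space_const: "(\<lambda>x. if x \<in> mspace m then v else 0) \<in> Cbu_space m"
  unfolding Cbu_space_def
  by (auto intro!: exI[of _ "norm v"] uniformly_continuous_map_eq[OF _ uniformly_continuous_map_const[THEN iffD2]])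

lemma Cbu_space_bump:
  assumes "x0 \<in> mspace m"
  shows "(\<lambda>x. if x \<in> mspace m then max 0 (r - mdist m x0 x) *\<^sub>R e else 0) \<in> Cbu_space m"
    (is "?u \<in> _")
proof -
  have "dist (?u x) (?u y) \<le> norm e * mdist m x y" if "x \<in> mspace m" "y \<in> mspace m" for x y
  proof -
    have "\<bar>max 0 (r - mdist m x0 x) - max 0 (r - mdist m x0 y)\<bar> \<le> mdist m x y"
      using Metric_space.mdist_reverse_triangle[OF Metric_space_mspace_mdist that(1) assms that(2)]
        mdist_commute[of m x x0]
      unfolding max_def by (smt (verit))
    then show ?thesis
      using that by (simp add: dist_norm mult.commute mult_left_mono flip: scaleR_diff_left)
  qed
  then have "Lipschitz_continuous_map m euclidean_metric ?u"
    unfolding Lipschitz_continuous_map_def by auto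
  moreover have "\<forall>x\<in>mspace m. norm (?u x) \<le> max 0 r * norm e"
    by (auto intro!: mult_right_mono simp: max_def) (metis mdist_nonneg not_le order.trans)
  ultimately show ?thesis
    unfolding Cbu_space_def by (auto intro: Lipschitz_imp_uniformly_continuous_map)
qed

definition const_map :: "'x topology \<Rightarrow> 'e::zero \<Rightarrow> 'x \<Rightarrow> 'e" where
  "const_map X v = (\<lambda>x. if x \<in> topspace X then v else 0)"

lemma const_map_zero [simp]: "const_map X 0 = (\<lambda>x. 0)"
  by (simp add: const_map_def)

definition admissible_function_space :: "'x topology \<Rightarrow> ('x \<Rightarrow> 'e::real_normed_vector) set \<Rightarrow> bool"
  where "admissible_function_space X A \<longleftrightarrow>
    (completely_regular_space X \<and> A = C_space X) \<or> (\<exists>m. X = mtopology_of m \<and> A = Cbu_space m)"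

lemma continuous_map_scaleR [continuous_intros]:
  fixes g :: "'a \<Rightarrow> 'b::real_normed_vector"
  shows "continuous_map X euclideanreal f \<Longrightarrow> continuous_map X euclidean g
    \<Longrightarrow> continuous_map X euclidean (\<lambda>x. f x *\<^sub>R g x)"
  by (simp add: continuous_map_atin tendsto_scaleR)

context
  fixes X :: "'x topology" and A :: "('x \<Rightarrow> 'e::real_normed_vector) set"
  assumes admissible: "admissible_function_space X A"
begin

lemma admissible_zero_outside: "f \<in> A \<Longrightarrow> x \<notin> topspace X \<Longrightarrow> f x = 0"
  using admissible unfolding admissible_function_space_def C_space_def Cbu_space_def by auto

lemma admissible_continuous: "f \<in> A \<Longrightarrow> continuous_map X euclidean f"
  using admissible unfolding admissible_function_space_def C_space_def Cbu_space_def
  by (auto dest: uniformly_continuous_imp_continuous_map)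

lemma admissible_add: "f \<in> A \<Longrightarrow> g \<in> A \<Longrightarrow> (\<lambda>x. f x + g x) \<in> A"
  using admissible unfolding admissible_function_space_def
  by (auto simp: C_space_def intro: continuous_map_add Cbu_space_add)

lemma admissible_scaleR: "f \<in> A \<Longrightarrow> (\<lambda>x. c *\<^sub>R f x) \<in> A"
  using admissible unfolding admissible_function_space_def
  by (auto simp: C_space_def intro: continuous_map_scaleR Cbu_space_scaleR)

lemma admissible_diff: "f \<in> A \<Longrightarrow> g \<in> A \<Longrightarrow> (\<lambda>x. f x - g x) \<in> A"
  using admissible_add[OF _ admissible_scaleR, of f g "-1"] by simp

lemma admissible_const: "const_map X v \<in> A"
proof -
  have "continuous_map X euclidean (const_map X v)"
    by (rule continuous_map_eq[of X euclidean "\<lambda>x. v"]) (auto simp: const_map_def)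
  then show ?thesis
    using admissible unfolding admissible_function_space_def
    by (auto simp: C_space_def Cbu_space_const const_map_def)
qed

lemma admissible_compose:
  fixes g :: "'e \<Rightarrow> 'e"
  assumes "f \<in> A" "g 0 = 0"
    and "\<And>B. uniformly_continuous_on (cball 0 B) g" "\<And>B. bounded (g ` cball 0 B)"
  shows "(\<lambda>x. g (f x)) \<in> A"
  using admissible unfolding admissible_function_space_def
proof (elim disjE exE conjE)
  assume A: "A = C_space X"
  have "isCont g v" for v
    using uniformly_continuous_imp_continuous[OF assms(3)[of "norm v + 1"]]
  proof (rule continuous_on_interior)
    have "ball 0 (norm v + 1) \<subseteq> interior (cball 0 (norm v + 1))"
      by (simp add: interior_maximal ball_subset_cball)
    then show "v \<in> interior (cball 0 (norm v + 1))"
      by auto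
  qed
  then have "continuous_on UNIV g"
    by (simp add: continuous_on_eq_continuous_at)
  then show ?thesis
    using assms(1,2) unfolding A C_space_def
    by (auto intro: continuous_map_compose[of X euclidean f euclidean g, unfolded o_def])
next
  fix m assume "A = Cbu_space m"
  then show ?thesis
    using assms Cbu_space_compose by blast
qed

lemma admissible_bump:
  assumes "openin X U" "x0 \<in> U" "(e::'e) \<noteq> 0"
  obtains u where "u \<in> A" "u x0 \<noteq> 0" "cozero X u \<subseteq> U"
  using admissible unfolding admissible_function_space_def
proof (elim disjE exE conjE)
  assume cr: "completely_regular_space X" and A: "A = C_space X"
  obtain f where f: "continuous_map X euclideanreal f" "f x0 = 0" "f ` (topspace X - U) \<subseteq> {1}"
    using cr assms(1,2) unfolding completely_regular_space_alt' by meson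
  define u where "u x = (if x \<in> topspace X then (1 - f x) *\<^sub>R e else 0)" for x
  have "continuous_map X euclidean u"
    unfolding u_def
    by (rule continuous_map_eq[of X euclidean "\<lambda>x. (1 - f x) *\<^sub>R e"]) (auto intro!: continuous_intros f(1))
  then have "u \<in> A"
    by (simp add: A C_space_def u_def)
  moreover have "u x0 \<noteq> 0"
    using assms(2,3) f(2) openin_subset[OF assms(1)] by (auto simp: u_def)
  moreover have "x \<in> U" if "x \<in> cozero X u" for x
  proof (rule ccontr)
    assume "x \<notin> U"
    with that f(3) have "f x = 1"
      by (auto simp: cozero_def)
    with that show False
      by (auto simp: cozero_def u_def)
  qed
  ultimately show thesis
    using that by blast
next
  fix m assume X: "X = mtopology_of m" and A: "A = Cbu_space m"
  interpret Metric_space "mspace m" "mdist m"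
    by simp
  obtain r where "r > 0" and r: "mball x0 r \<subseteq> U"
    using assms(1,2) X openin_mtopology by (auto simp: mtopology_of_def)
  have "x0 \<in> mspace m"
    using assms(2) openin_subset[OF assms(1)] X by auto
  define u where "u x = (if x \<in> mspace m then max 0 (r - mdist m x0 x) *\<^sub>R e else 0)" for x
  have "u \<in> A"
    unfolding A u_def using \<open>x0 \<in> mspace m\<close> by (rule Cbu_space_bump)
  moreover have "u x0 \<noteq> 0"
    using \<open>r > 0\<close> \<open>x0 \<in> mspace m\<close> assms(3) by (simp add: u_def)
  moreover have "x \<in> U" if "x \<in> cozero X u" for x
  proof -
    from that have "x \<in> mspace m" "mdist m x0 x < r"
      by (auto simp: X cozero_def u_def split: if_splits)
    then show "x \<in> U"
      using r \<open>x0 \<in> mspace m\<close> by auto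
  qed
  ultimately show thesis
    using that by blast
qed

lemma admissible_stair_map: "f \<in> A \<Longrightarrow> (\<lambda>x. stair_map s (f x)) \<in> A"
  by (rule admissible_compose) (auto intro: uniformly_continuous_on_stair_map bounded_stair_map_image)

lemma admissible_radial_profile:
  assumes "f \<in> A" "continuous_on UNIV p" "p 0 = 0"
  shows "(\<lambda>x. p (norm (f x)) *\<^sub>R w) \<in> A"
  using assms by (intro admissible_compose[where g = "\<lambda>v. p (norm v) *\<^sub>R w"])
    (auto intro: uniformly_continuous_on_radial_profile bounded_radial_profile_image)

end

section \<open>Linear biseparating maps\<close>

lemma linear_on_inv_into:
  assumes "admissible_function_space X AX" "bij_betw T AX AY" "linear_on AX T"
  shows "linear_on AY (inv_into AX T)"
proof -
  have inv: "inv_into AX T (T f) = f" if "f \<in> AX" for f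
    using assms(2) that by (simp add: bij_betw_imp_inj_on)
  have T_inv: "T (inv_into AX T g) = g" and inv_in: "inv_into AX T g \<in> AX" if "g \<in> AY" for g
    using assms(2) that by (auto simp: bij_betw_def f_inv_into_f inv_into_into)
  have "inv_into AX T (\<lambda>x. g x + h x) = (\<lambda>y. inv_into AX T g y + inv_into AX T h y)"
    if "g \<in> AY" "h \<in> AY" for g h
  proof -
    have "T (\<lambda>x. inv_into AX T g x + inv_into AX T h x) = (\<lambda>y. g y + h y)"
      using assms(3) inv_in T_inv that unfolding linear_on_def by simp
    then show ?thesis
      using inv admissible_add[OF assms(1) inv_in inv_in] that by metis
  qed
  moreover have "inv_into AX T (\<lambda>x. c *\<^sub>R g x) = (\<lambda>y. c *\<^sub>R inv_into AX T g y)"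
    if "g \<in> AY" for c g
  proof -
    have "T (\<lambda>x. c *\<^sub>R inv_into AX T g x) = (\<lambda>y. c *\<^sub>R g y)"
      using assms(3) inv_in T_inv that unfolding linear_on_def by simp
    then show ?thesis
      using inv admissible_scaleR[OF assms(1) inv_in] that by metis
  qed
  ultimately show ?thesis
    unfolding linear_on_def by blast
qed

locale linear_separating_map =
  fixes X :: "'x topology" and Y :: "'y topology"
    and AX :: "('x \<Rightarrow> 'e::real_normed_vector) set" and AY :: "('y \<Rightarrow> 'f::real_normed_vector) set"
    and T :: "('x \<Rightarrow> 'e) \<Rightarrow> ('y \<Rightarrow> 'f)"
  assumes admissible_dom: "admissible_function_space X AX"
    and admissible_cod: "admissible_function_space Y AY"
    and maps_into: "\<And>f. f \<in> AX \<Longrightarrow> T f \<in> AY"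
    and linear: "linear_on AX T"
    and separating: "separating_map X Y AX T"
begin

lemma map_scaleR: "f \<in> AX \<Longrightarrow> T (\<lambda>x. c *\<^sub>R f x) = (\<lambda>y. c *\<^sub>R T f y)"
  using linear by (simp add: linear_on_def)

lemma map_zero: "T (\<lambda>x. 0) = (\<lambda>y. 0)"
  using map_scaleR[OF admissible_const[OF admissible_dom, of 0], of 0] by simp

lemma map_diff:
  assumes "f \<in> AX" "g \<in> AX"
  shows "T (\<lambda>x. f x - g x) = (\<lambda>y. T f y - T g y)"
proof -
  have "(\<lambda>x. (-1) *\<^sub>R g x) \<in> AX"
    by (rule admissible_scaleR[OF admissible_dom assms(2)])
  then have "T (\<lambda>x. f x + (-1) *\<^sub>R g x) = (\<lambda>y. T f y + T (\<lambda>x. (-1) *\<^sub>R g x) y)"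
    by (rule linear[unfolded linear_on_def, THEN conjunct1, rule_format, OF assms(1)])
  then show ?thesis
    using map_scaleR[OF assms(2), of "-1"] by simp
qed

lemma eq_on_cozero:
  assumes "u \<in> AX" "f \<in> AX" "g \<in> AX" "\<And>x. x \<in> cozero X u \<Longrightarrow> f x = g x"
    and "y \<in> cozero Y (T u)"
  shows "T f y = T g y"
proof -
  have "cozero X (\<lambda>x. f x - g x) \<inter> cozero X u = {}"
    using assms(4) by (auto simp: cozero_def)
  then have "cozero Y (T (\<lambda>x. f x - g x)) \<inter> cozero Y (T u) = {}"
    using separating admissible_diff[OF admissible_dom assms(2,3)] assms(1)
    unfolding separating_map_def by blast
  then show ?thesis
    using assms(5) by (auto simp: cozero_def map_diff[OF assms(2,3)])
qed

lemma linear_const_eval: "linear (\<lambda>v. T (const_map X v) y)"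
proof
  fix v w :: 'e and c :: real
  have "const_map X (v + w) = (\<lambda>x. const_map X v x + const_map X w x)"
    "const_map X (c *\<^sub>R v) = (\<lambda>x. c *\<^sub>R const_map X v x)"
    by (auto simp: const_map_def)
  moreover have "const_map X v \<in> AX" "const_map X w \<in> AX"
    by (rule admissible_const[OF admissible_dom])+
  ultimately show "T (const_map X (v + w)) y = T (const_map X v) y + T (const_map X w) y"
    "T (const_map X (c *\<^sub>R v)) y = c *\<^sub>R T (const_map X v) y"
    using linear unfolding linear_on_def by simp_all
qed

end

locale linear_biseparating_pair =
  T: linear_separating_map X Y AX AY T + S: linear_separating_map Y X AY AX S
  for X :: "'x topology" and Y :: "'y topology"
    and AX :: "('x \<Rightarrow> 'e::real_normed_vector) set" and AY :: "('y \<Rightarrow> 'f::real_normed_vector) set"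
    and T S +
  assumes S_T: "\<And>f. f \<in> AX \<Longrightarrow> S (T f) = f" and T_S: "\<And>g. g \<in> AY \<Longrightarrow> T (S g) = g"
begin

sublocale swap: linear_biseparating_pair Y X AY AX S T
  by unfold_locales (simp_all add: S_T T_S)

lemma cozero_map_nonempty:
  assumes "u \<in> AX" "x \<in> topspace X" "u x \<noteq> 0"
  shows "cozero Y (T u) \<noteq> {}"
proof
  assume "cozero Y (T u) = {}"
  then have "T u = (\<lambda>y. 0)"
    using admissible_zero_outside[OF T.admissible_cod T.maps_into[OF assms(1)]]
    by (auto simp: cozero_def)
  then have "u = (\<lambda>x. 0)"
    using S_T[OF assms(1)] S.map_zero by simp
  with assms(3) show False
    by simp
qed

context
  fixes \<phi> :: "'x \<Rightarrow> 'e" and w :: 'f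
  assumes \<phi>: "\<phi> \<in> AX" and w: "w \<noteq> 0" and T_\<phi>: "\<And>y. y \<in> topspace Y \<Longrightarrow> T \<phi> y = w"
    and Y_ne: "topspace Y \<noteq> {}"
begin

lemma nonzero_vector_exists: obtains e :: 'e where "e \<noteq> 0"
proof -
  obtain y where "y \<in> topspace Y"
    using Y_ne by blast
  then have "\<phi> \<noteq> (\<lambda>x. 0)"
    using T_\<phi> T.map_zero w by force
  then show thesis
    using that by fastforce
qed

lemma map_stair_on_level_set:
  assumes "u \<in> AX" "cozero X u \<subseteq> stair_level_set X \<phi> s n" "y \<in> cozero Y (T u)"
  shows "T (\<lambda>x. stair_map s (\<phi> x)) y = of_int n *\<^sub>R w"
proof -
  have "T (\<lambda>x. stair_map s (\<phi> x)) y = T (\<lambda>x. of_int n *\<^sub>R \<phi> x) y"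
  proof (rule T.eq_on_cozero[OF assms(1) _ _ _ assms(3)])
    show "(\<lambda>x. stair_map s (\<phi> x)) \<in> AX" "(\<lambda>x. of_int n *\<^sub>R \<phi> x) \<in> AX"
      using \<phi> T.admissible_dom by (simp_all add: admissible_stair_map admissible_scaleR)
    show "stair_map s (\<phi> x) = of_int n *\<^sub>R \<phi> x" if "x \<in> cozero X u" for x
    proof -
      have "x \<in> stair_level_set X \<phi> s n"
        using assms(2) that by blast
      then show ?thesis
        by (intro stair_map_eq_int_scaleR) (auto simp: stair_level_set_def)
    qed
  qed
  then show ?thesis
    using assms(3) T_\<phi> T.map_scaleR[OF \<phi>] by (simp add: cozero_def)
qed

lemma inverse_profile_on_level_set:
  assumes p: "continuous_on UNIV p" "p 0 = 0"
    and x: "x \<in> stair_level_set X \<phi> s n"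
  shows "S (\<lambda>y. p (norm (T (\<lambda>x. stair_map s (\<phi> x)) y)) *\<^sub>R w) x = p (\<bar>of_int n\<bar> * norm w) *\<^sub>R \<phi> x"
proof -
  define \<zeta> where "\<zeta> = (\<lambda>y. p (norm (T (\<lambda>x. stair_map s (\<phi> x)) y)) *\<^sub>R w)"
  obtain e :: 'e where "e \<noteq> 0"
    using nonzero_vector_exists .
  then obtain u where u: "u \<in> AX" "u x \<noteq> 0" "cozero X u \<subseteq> stair_level_set X \<phi> s n"
    using admissible_bump[OF T.admissible_dom openin_stair_level_set x]
      admissible_continuous[OF T.admissible_dom \<phi>] by metis
  have T_\<phi>_in: "T \<phi> \<in> AY"
    using T.maps_into[OF \<phi>] .
  have "\<zeta> \<in> AY"
    unfolding \<zeta>_def using T.admissible_cod T.maps_into admissible_stair_map[OF T.admissible_dom \<phi>] p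
    by (intro admissible_radial_profile) auto
  have "S \<zeta> x = S (\<lambda>y. p (\<bar>of_int n\<bar> * norm w) *\<^sub>R T \<phi> y) x"
  proof (rule S.eq_on_cozero[OF T.maps_into[OF u(1)] \<open>\<zeta> \<in> AY\<close>])
    show "(\<lambda>y. p (\<bar>of_int n\<bar> * norm w) *\<^sub>R T \<phi> y) \<in> AY"
      by (rule admissible_scaleR[OF T.admissible_cod T_\<phi>_in])
    show "\<zeta> y = p (\<bar>of_int n\<bar> * norm w) *\<^sub>R T \<phi> y" if "y \<in> cozero Y (T u)" for y
      using map_stair_on_level_set[OF u(1,3) that] that T_\<phi> by (simp add: \<zeta>_def cozero_def)
    show "x \<in> cozero X (S (T u))"
      using S_T[OF u(1)] u(2) x by (simp add: cozero_def stair_level_set_def)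
  qed
  then show ?thesis
    using S.map_scaleR[OF T_\<phi>_in] S_T[OF \<phi>] by (simp add: \<zeta>_def)
qed

lemma stair_level_sets_avoid_nbhd:
  assumes "x1 \<in> topspace X" "0 \<le> s"
  shows "\<exists>U N. openin X U \<and> x1 \<in> U \<and> (\<forall>n\<ge>N. U \<inter> stair_level_set X \<phi> s n = {})"
proof -
  \<comment> \<open>On the n-th level set \<theta> = p (n |w|) \<phi>, and p grows fast enough for |\<theta>| > n there.\<close>
  define p where "p = (\<lambda>t. t / norm w * (t / norm w + 1)^2)"
  define \<theta> where "\<theta> = S (\<lambda>y. p (norm (T (\<lambda>x. stair_map s (\<phi> x)) y)) *\<^sub>R w)"
  have p: "continuous_on UNIV p" "p 0 = 0"
    unfolding p_def using w by (auto intro!: continuous_intros)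
  have "(\<lambda>y. p (norm (T (\<lambda>x. stair_map s (\<phi> x)) y)) *\<^sub>R w) \<in> AY"
    using T.admissible_cod T.maps_into[OF admissible_stair_map[OF T.admissible_dom \<phi>]] p
    by (rule admissible_radial_profile)
  then have "\<theta> \<in> AX"
    unfolding \<theta>_def by (rule S.maps_into)
  then have "continuous_map X euclidean \<theta>"
    by (rule admissible_continuous[OF T.admissible_dom])
  define U where "U = {x \<in> topspace X. \<theta> x \<in> ball (\<theta> x1) 1}"
  define N where "N = \<lceil>norm (\<theta> x1)\<rceil> + 2"
  have "openin euclidean (ball (\<theta> x1) 1)"
    by (simp flip: open_openin)
  then have "openin X U"
    unfolding U_def by (rule openin_continuous_map_preimage[OF \<open>continuous_map X euclidean \<theta>\<close>])
  moreover have "x1 \<in> U"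
    using assms(1) by (simp add: U_def)
  moreover have "U \<inter> stair_level_set X \<phi> s n = {}" if "N \<le> n" for n
  proof (rule equals0I)
    fix x assume "x \<in> U \<inter> stair_level_set X \<phi> s n"
    then have xU: "norm (\<theta> x) < norm (\<theta> x1) + 1" and x: "x \<in> stair_level_set X \<phi> s n"
      using norm_triangle_ineq2[of "\<theta> x" "\<theta> x1"] by (auto simp: U_def dist_norm norm_minus_commute)
    have N: "norm (\<theta> x1) \<le> of_int N - 2"
      unfolding N_def by linarith
    then have "1 \<le> n"
      using that norm_ge_zero[of "\<theta> x1"] by linarith
    have "\<theta> x = (of_int n * (of_int n + 1)^2) *\<^sub>R \<phi> x"
      using inverse_profile_on_level_set[OF p x] \<open>1 \<le> n\<close> w by (simp add: \<theta>_def p_def)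
    moreover have "1 < (of_int n + 1)^2 * norm (\<phi> x)"
      using x assms(2) by (intro near_int_inverse_sqrt_imp_one_less) (auto simp: stair_level_set_def)
    ultimately have "of_int n < norm (\<theta> x)"
      using \<open>1 \<le> n\<close> by (simp add: mult.assoc)
    with xU N that show False
      by linarith
  qed
  ultimately show ?thesis
    by blast
qed

lemma zero_imp_locally_zero:
  assumes "x1 \<in> topspace X" "\<phi> x1 = 0"
  obtains W where "openin X W" "x1 \<in> W" "\<And>x. x \<in> W \<Longrightarrow> \<phi> x = 0"
proof -
  let ?shifts = "{0, 1/3, 2/3} :: real set"
  have "\<forall>s\<in>?shifts. \<exists>U N. openin X U \<and> x1 \<in> U \<and> (\<forall>n\<ge>N. U \<inter> stair_level_set X \<phi> s n = {})"
    by (intro ballI stair_level_sets_avoid_nbhd[OF assms(1)]) auto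
  then obtain U where "\<forall>s\<in>?shifts. \<exists>N. openin X (U s) \<and> x1 \<in> U s \<and>
      (\<forall>n\<ge>N. U s \<inter> stair_level_set X \<phi> s n = {})"
    by (rule bchoice[elim_format]) blast
  then obtain N where UN: "\<forall>s\<in>?shifts. openin X (U s) \<and> x1 \<in> U s \<and>
      (\<forall>n\<ge>N s. U s \<inter> stair_level_set X \<phi> s n = {})"
    by (rule bchoice[elim_format]) blast
  define M where "M = max 0 (Max (N ` ?shifts))"
  define \<delta> :: real where "\<delta> = 1 / (of_int M + 2)^2"
  define W where "W = (\<Inter>s\<in>?shifts. U s) \<inter> {x \<in> topspace X. \<phi> x \<in> ball 0 \<delta>}"
  have "\<delta> > 0"
    by (simp add: \<delta>_def M_def)
  have "openin X {x \<in> topspace X. \<phi> x \<in> ball 0 \<delta>}"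
    using admissible_continuous[OF T.admissible_dom \<phi>] openin_continuous_map_preimage open_openin
    by (metis open_ball)
  moreover have "openin X (\<Inter>s\<in>?shifts. U s)"
    using UN by (intro openin_Inter) auto
  ultimately have "openin X W"
    unfolding W_def by (rule openin_Int[rotated])
  moreover have "x1 \<in> W"
    using UN assms \<open>\<delta> > 0\<close> by (simp add: W_def)
  moreover have "\<phi> x = 0" if "x \<in> W" for x
  proof (rule ccontr)
    assume "\<phi> x \<noteq> 0"
    then have "0 < norm (\<phi> x)" "norm (\<phi> x) < \<delta>"
      using that by (auto simp: W_def)
    moreover obtain s n where s: "s \<in> ?shifts" and n: "\<bar>s + 1 / sqrt (norm (\<phi> x)) - of_int n\<bar> < 1/4"
      using shifted_near_int by blast
    ultimately have "M < n"
      using s by (intro near_int_inverse_sqrt_imp_less) (auto simp: \<delta>_def M_def)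
    moreover have "N s \<le> Max (N ` ?shifts)"
      by (rule Max_ge[OF _ imageI[OF s]]) simp
    ultimately have "N s \<le> n"
      unfolding M_def by linarith
    moreover have "x \<in> U s"
      using that s unfolding W_def by blast
    moreover have "x \<in> stair_level_set X \<phi> s n"
      using that n \<open>\<phi> x \<noteq> 0\<close> by (simp add: W_def stair_level_set_def)
    ultimately show False
      using UN s by blast
  qed
  ultimately show thesis
    using that by blast
qed

theorem nonvanishing:
  assumes "x1 \<in> topspace X"
  shows "\<phi> x1 \<noteq> 0"
proof
  assume "\<phi> x1 = 0"
  then obtain W where W: "openin X W" "x1 \<in> W" "\<And>x. x \<in> W \<Longrightarrow> \<phi> x = 0"
    using zero_imp_locally_zero[OF assms] by blast
  obtain e :: 'e where "e \<noteq> 0"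
    using nonzero_vector_exists .
  then obtain u where u: "u \<in> AX" "u x1 \<noteq> 0" "cozero X u \<subseteq> W"
    using admissible_bump[OF T.admissible_dom W(1,2)] by metis
  then obtain y where y: "y \<in> cozero Y (T u)"
    using cozero_map_nonempty[OF u(1) assms] by blast
  have "T \<phi> y = T (\<lambda>x. 0) y"
    using T.eq_on_cozero[OF u(1) \<phi> admissible_const[OF T.admissible_dom, of 0] _ y] u(3) W(3)
    by auto
  then show False
    using y T_\<phi> w T.map_zero by (simp add: cozero_def)
qed

end

end

context linear_biseparating_pair
begin

lemma inj_const_eval:
  assumes "y \<in> topspace Y" "topspace X \<noteq> {}"
  shows "inj (\<lambda>v. T (const_map X v) y)"
  unfolding linear_inj_iff_eq_0[OF T.linear_const_eval]
proof (intro allI impI)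
  fix v assume T_v: "T (const_map X v) y = 0"
  show "v = 0"
  proof (rule ccontr)
    assume "v \<noteq> 0"
    have const_in: "const_map X v \<in> AX"
      by (rule admissible_const[OF T.admissible_dom])
    have "S (T (const_map X v)) x = v" if "x \<in> topspace X" for x
      using S_T[OF const_in] that by (simp add: const_map_def)
    then have "T (const_map X v) y \<noteq> 0"
      using swap.nonvanishing[OF T.maps_into[OF const_in] \<open>v \<noteq> 0\<close> _ assms(2,1)] by blast
    with T_v show False
      by contradiction
  qed
qed

end

lemma finite_dim_space_bij_of_linear_injections:
  fixes L :: "'e::real_vector \<Rightarrow> 'f::real_vector" and M :: "'f \<Rightarrow> 'e"
  assumes "finite_dim_space TYPE('e)" "linear L" "inj L" "linear M" "inj M"
  shows "finite_dim_space TYPE('f) \<and> bij L"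
proof -
  obtain B :: "'e set" where B: "finite B" "span B = UNIV"
    using assms(1) by (auto simp: finite_dim_space_def)
  obtain C where C: "C \<subseteq> B" "independent C" "B \<subseteq> span C"
    using maximal_independent_subset[of B] by blast
  have "span C = UNIV"
    using B(2) C(3) by (metis span_mono span_span top.extremum_uniqueI)
  interpret E: finite_dimensional_vector_space scaleR C
    by unfold_locales (use C B(1) finite_subset \<open>span C = UNIV\<close> in \<open>auto simp: dependent_raw_def span_raw_def\<close>)
  have "surj (M \<circ> L)"
    using linear_compose[OF assms(2,4)] inj_compose[OF assms(5,3)]
    by (intro E.linear_inj_imp_surj) (auto simp: linear_def)
  have "v \<in> range L" for v
  proof -
    obtain e where "M v = M (L e)"
      using \<open>surj (M \<circ> L)\<close> by (metis comp_apply surjD)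
    then show "v \<in> range L"
      using assms(5) by (simp add: inj_eq)
  qed
  then have "surj L"
    by blast
  then have "span (L ` B) = UNIV"
    using span_linear_image[OF assms(2)] B(2) by simp
  then show ?thesis
    using B(1) assms(3) \<open>surj L\<close> by (auto simp: finite_dim_space_def bij_def)
qed

theorem corollary2p5:
  fixes X :: "'x topology" and Y :: "'y topology"
    and AX :: "('x \<Rightarrow> 'e::real_normed_vector) set"
    and AY :: "('y \<Rightarrow> 'f::real_normed_vector) set"
    and T :: "('x \<Rightarrow> 'e) \<Rightarrow> ('y \<Rightarrow> 'f)"
  assumes situation:
    "(realcompact X \<and> realcompact Y \<and> AX = C_space X \<and> AY = C_space Y)
     \<or> (\<exists>mX mY. X = mtopology_of mX \<and> Y = mtopology_of mY \<and> mcomplete_of mX \<and> mcomplete_of mY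
            \<and> AX = Cbu_space mX \<and> AY = Cbu_space mY)"
    and X_ne: "topspace X \<noteq> {}" and Y_ne: "topspace Y \<noteq> {}"
    and E_fin: "finite_dim_space TYPE('e)"
    and T_lin: "linear_on AX T"
    and T_bisep: "biseparating_map X Y AX AY T"
  shows "finite_dim_space TYPE('f) \<and> (\<exists>L::'e \<Rightarrow> 'f. linear L \<and> bij L)"
proof -
  have adm: "admissible_function_space X AX" "admissible_function_space Y AY"
    using situation unfolding admissible_function_space_def realcompact_def by blast+
  have bij: "bij_betw T AX AY"
    using T_bisep by (simp add: biseparating_map_def)
  interpret linear_biseparating_pair X Y AX AY T "inv_into AX T"
    using adm T_lin linear_on_inv_into[OF adm(1) bij T_lin] T_bisep bij
    by unfold_locales
      (auto simp: biseparating_map_def bij_betw_def inv_into_into f_inv_into_f bij_betw_imp_inj_on)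
  obtain x0 y0 where "x0 \<in> topspace X" "y0 \<in> topspace Y"
    using X_ne Y_ne by blast
  then have "inj (\<lambda>v. T (const_map X v) y0)" "inj (\<lambda>v. inv_into AX T (const_map Y v) x0)"
    using X_ne Y_ne by (simp_all add: inj_const_eval swap.inj_const_eval)
  then have "finite_dim_space TYPE('f) \<and> bij (\<lambda>v. T (const_map X v) y0)"
    using finite_dim_space_bij_of_linear_injections[OF E_fin T.linear_const_eval _ S.linear_const_eval]
    by blast
  then show ?thesis
    using T.linear_const_eval by blast
qed

end
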